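(* For every integer $m\ge2$ and every $\alpha\in[0,1]$, every deterministic social choice rule on $m$ candidates has distortion at least $2+\alpha-2(1-\alpha)/\lfloor m\rfloor_{\mathrm{even}}$ on $\alpha$-decisive metric spaces, where $\lfloor m\rfloor_{\mathrm{even}}$ is the largest even integer at most $m$.
   Context: An election: voters $V=\{1,\dots,n\}$, a fixed finite set $C$ of $m$ candidates, a profile $\sigma$ of linear orders over $C$. A distance function $d$ on $V\cup C$ is nonnegative, symmetric and satisfies the triangle inequality (co-location allowed); it is consistent with $\sigma$ if $d(i,c)\le d(i,c')$ whenever $i$ ranks $c$ above $c'$. $\mathrm{top}(i)$ is $i$'s first choice. $d$ is $\alpha$-decisive if $d(i,\mathrm{top}(i))\le\alpha\,d(i,c)$ for every voter $i$ and every $c\ne\mathrm{top}(i)$. $\mathrm{SC}(c)=\sum_{i\in V}d(i,c)$. A deterministic social choice rule maps each profile (any number of voters) to a candidate; its distortion on $\alpha$-decisive metric spaces is $\sup_\sigma\sup_d \mathrm{SC}(f(\sigma))/\min_c\mathrm{SC}(c)$ over $\alpha$-decisive $d$ consistent with $\sigma$. *)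

theory Defs
  imports Main Complex_Main
begin

(* Points of the space V \<union> C: voters are Inl i (i < n, voters 0-indexed),
   candidates are Inr c (c \<in> C). *)

(* A linear order over C, represented as the ranking list (best first). *)
definition is_ranking :: "'c set \<Rightarrow> 'c list \<Rightarrow> bool" where
  "is_ranking C r \<longleftrightarrow> distinct r \<and> set r = C"

definition is_profile :: "'c set \<Rightarrow> 'c list list \<Rightarrow> bool" where
  "is_profile C \<sigma> \<longleftrightarrow> (\<forall>r \<in> set \<sigma>. is_ranking C r)"

definition is_rule :: "'c set \<Rightarrow> ('c list list \<Rightarrow> 'c) \<Rightarrow> bool" where
  "is_rule C f \<longleftrightarrow> (\<forall>\<sigma>. is_profile C \<sigma> \<and> \<sigma> \<noteq> [] \<longrightarrow> f \<sigma> \<in> C)"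

definition points :: "nat \<Rightarrow> 'c set \<Rightarrow> (nat + 'c) set" where
  "points n C = Inl ` {..<n} \<union> Inr ` C"

(* Distance function (pseudo-metric, co-location allowed) on V \<union> C. *)
definition is_metric_on :: "(nat + 'c) set \<Rightarrow> ((nat + 'c) \<Rightarrow> (nat + 'c) \<Rightarrow> real) \<Rightarrow> bool" where
  "is_metric_on P d \<longleftrightarrow>
     (\<forall>x \<in> P. d x x = 0) \<and>
     (\<forall>x \<in> P. \<forall>y \<in> P. 0 \<le> d x y \<and> d x y = d y x) \<and>
     (\<forall>x \<in> P. \<forall>y \<in> P. \<forall>z \<in> P. d x z \<le> d x y + d y z)"

definition consistent :: "'c list list \<Rightarrow> ((nat + 'c) \<Rightarrow> (nat + 'c) \<Rightarrow> real) \<Rightarrow> bool" where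
  "consistent \<sigma> d \<longleftrightarrow>
     (\<forall>i < length \<sigma>. \<forall>j k. j < k \<and> k < length (\<sigma> ! i) \<longrightarrow>
        d (Inl i) (Inr (\<sigma> ! i ! j)) \<le> d (Inl i) (Inr (\<sigma> ! i ! k)))"

definition top :: "'c list list \<Rightarrow> nat \<Rightarrow> 'c" where
  "top \<sigma> i = hd (\<sigma> ! i)"

definition decisive :: "real \<Rightarrow> 'c set \<Rightarrow> 'c list list \<Rightarrow> ((nat + 'c) \<Rightarrow> (nat + 'c) \<Rightarrow> real) \<Rightarrow> bool" where
  "decisive \<alpha> C \<sigma> d \<longleftrightarrow>
     (\<forall>i < length \<sigma>. \<forall>c \<in> C. c \<noteq> top \<sigma> i \<longrightarrow>
        d (Inl i) (Inr (top \<sigma> i)) \<le> \<alpha> * d (Inl i) (Inr c))"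

definition SC :: "'c list list \<Rightarrow> ((nat + 'c) \<Rightarrow> (nat + 'c) \<Rightarrow> real) \<Rightarrow> 'c \<Rightarrow> real" where
  "SC \<sigma> d c = (\<Sum>i < length \<sigma>. d (Inl i) (Inr c))"

(* "The distortion of f on \<alpha>-decisive metric spaces is at least B", i.e.
   sup over instances of SC(f \<sigma>) / min_c SC(c) is \<ge> B (a ratio x/0 with x > 0
   counting as +\<infinity>): for every c < B some instance has SC(f \<sigma>) > c * min SC. *)
definition distortion_at_least :: "'c set \<Rightarrow> real \<Rightarrow> ('c list list \<Rightarrow> 'c) \<Rightarrow> real \<Rightarrow> bool" where
  "distortion_at_least C \<alpha> f B \<longleftrightarrow>
     (\<forall>c < B. \<exists>\<sigma> d. is_profile C \<sigma> \<and> \<sigma> \<noteq> [] \<and>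
        is_metric_on (points (length \<sigma>) C) d \<and> consistent \<sigma> d \<and> decisive \<alpha> C \<sigma> d \<and>
        SC \<sigma> d (f \<sigma>) > c * Min (SC \<sigma> d ` C))"

definition floor_even :: "nat \<Rightarrow> nat" where
  "floor_even m = 2 * (m div 2)"

end

theory Submission
  imports Defs
begin

(* Let t = m div 2 and take 2t voters, each with its own favourite, split into two halves
   of t; every voter ranks its favourite first, then the rest of its half, then the others. This profile
   does not tell the halves apart, so whatever the rule elects lies outside some half k.
   In a tree metric, collapse half k (voters and candidates) to a single point and put
   every other voter at distance \<alpha> from its favourite and 1 from all other candidates.
   A candidate of half k then has social cost t, the elected one at least
   (2 + \<alpha>) t - (1 - \<alpha>). *)

definition spider_dist :: "'l \<times> real \<Rightarrow> 'l \<times> real \<Rightarrow> real" where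
  "spider_dist p q = (if fst p = fst q then \<bar>snd p - snd q\<bar> else snd p + snd q)"

lemma is_metric_on_spider_dist:
  assumes "\<And>x. 0 \<le> snd (pos x)"
  shows "is_metric_on P (\<lambda>x y. spider_dist (pos x) (pos y))"
  using assms by (auto simp: is_metric_on_def spider_dist_def abs_if)

lemma consistent_if_sorted_by_key:
  fixes key :: "nat \<Rightarrow> 'c \<Rightarrow> 'k::linorder"
  assumes sorted: "\<And>i. i < length \<sigma> \<Longrightarrow> sorted (map (key i) (\<sigma> ! i))"
    and mono: "\<And>i c c'. i < length \<sigma> \<Longrightarrow> key i c \<le> key i c' \<Longrightarrow>
      d (Inl i) (Inr c) \<le> d (Inl i) (Inr c')"
  shows "consistent \<sigma> d"
  unfolding consistent_def
proof (intro allI impI)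
  fix i j k
  assume "i < length \<sigma>" and "j < k \<and> k < length (\<sigma> ! i)"
  moreover from this have "key i (\<sigma> ! i ! j) \<le> key i (\<sigma> ! i ! k)"
    using sorted_nth_mono[OF sorted] by fastforce
  ultimately show "d (Inl i) (Inr (\<sigma> ! i ! j)) \<le> d (Inl i) (Inr (\<sigma> ! i ! k))"
    using mono by blast
qed

lemma distortion_at_leastI:
  assumes "finite C" and "0 < B" and "is_profile C \<sigma>" and "\<sigma> \<noteq> []"
    and metric: "is_metric_on (points (length \<sigma>) C) d"
    and "consistent \<sigma> d" and "decisive \<alpha> C \<sigma> d"
    and "y \<in> C" and "0 < SC \<sigma> d y" and "B * SC \<sigma> d y \<le> SC \<sigma> d (f \<sigma>)"
  shows "distortion_at_least C \<alpha> f B"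
  unfolding distortion_at_least_def
proof (intro allI impI exI conjI)
  fix c :: real
  assume "c < B"
  define M where "M = Min (SC \<sigma> d ` C)"
  have "0 \<le> SC \<sigma> d x" if "x \<in> C" for x
    using metric that unfolding SC_def is_metric_on_def points_def by (intro sum_nonneg) auto
  moreover have "M \<in> SC \<sigma> d ` C"
    unfolding M_def using \<open>finite C\<close> \<open>y \<in> C\<close> by (intro Min_in) auto
  ultimately have "0 \<le> M"
    by auto
  have "M \<le> SC \<sigma> d y"
    unfolding M_def using \<open>finite C\<close> \<open>y \<in> C\<close> by simp
  have "c * M < B * SC \<sigma> d y"
  proof (cases "c \<le> 0")
    case True
    then have "c * M \<le> 0"
      using \<open>0 \<le> M\<close> by (simp add: mult_nonpos_nonneg)
    also have "0 < B * SC \<sigma> d y"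
      using \<open>0 < B\<close> \<open>0 < SC \<sigma> d y\<close> by simp
    finally show ?thesis .
  next
    case False
    then have "c * M \<le> c * SC \<sigma> d y"
      using \<open>M \<le> SC \<sigma> d y\<close> by (simp add: mult_left_mono)
    also have "\<dots> < B * SC \<sigma> d y"
      using \<open>c < B\<close> \<open>0 < SC \<sigma> d y\<close> by simp
    finally show ?thesis .
  qed
  then show "c * Min (SC \<sigma> d ` C) < SC \<sigma> d (f \<sigma>)"
    using assms unfolding M_def by linarith
qed (use assms in auto)

locale split_profile =
  fixes L :: "'c list" and t :: nat and \<alpha> :: real
  assumes distinct_L: "distinct L" and t_pos: "0 < t" and two_t_le_length: "2 * t \<le> length L"
    and \<alpha>_nonneg: "0 \<le> \<alpha>" and \<alpha>_le_1: "\<alpha> \<le> 1"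
begin

definition block :: "nat \<Rightarrow> nat set" where
  "block k = {k * t..<k * t + t}"

definition half :: "nat \<Rightarrow> 'c set" where
  "half k = nth L ` block k"

lemma in_block_iff: "i \<in> block k \<longleftrightarrow> i div t = k"
proof
  assume "i div t = k"
  then show "i \<in> block k"
    using dividend_less_div_times[OF t_pos, of i] by (auto simp: block_def)
next
  assume "i \<in> block k"
  then show "i div t = k"
    by (intro div_nat_eqI) (auto simp: block_def algebra_simps)
qed

lemma lessThan_eq_blocks:
  assumes "k \<le> 1"
  shows "{..<2 * t} = block k \<union> block (1 - k)" and "block k \<inter> block (1 - k) = {}"
  using assms by (auto simp: block_def le_Suc_eq)

lemma inj_on_nth_voters: "inj_on (nth L) {..<2 * t}"
  using distinct_L two_t_le_length by (intro inj_on_nth) auto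

lemma nth_in_half_iff:
  assumes "i < 2 * t" and "k \<le> 1"
  shows "L ! i \<in> half k \<longleftrightarrow> i div t = k"
proof -
  have "block k \<subseteq> {..<2 * t}"
    using lessThan_eq_blocks(1)[OF assms(2)] by blast
  then show ?thesis
    using assms(1) unfolding half_def in_block_iff[symmetric]
    by (intro inj_on_image_mem_iff[OF inj_on_nth_voters]) auto
qed

lemma half_disjoint:
  assumes "k \<le> 1"
  shows "half k \<inter> half (1 - k) = {}"
proof -
  have "L ! i \<notin> half k" if "i \<in> block (1 - k)" for i
    using that assms nth_in_half_iff[of i k] in_block_iff[of i "1 - k"]
      lessThan_eq_blocks[OF assms]
    by auto
  then have "x \<notin> half k" if "x \<in> half (1 - k)" for x
    using that unfolding half_def[of "1 - k"] by blast
  then show ?thesis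
    by blast
qed

lemma half_subset: "k \<le> 1 \<Longrightarrow> half k \<subseteq> set L"
  using two_t_le_length by (auto simp: half_def block_def le_Suc_eq)

lemma nth_in_half: "L ! (k * t) \<in> half k"
  using t_pos by (auto simp: half_def block_def)

definition rank_key :: "nat \<Rightarrow> 'c \<Rightarrow> nat" where
  "rank_key i c = (if c = L ! i then 0 else if c \<in> half (i div t) then 1 else 2)"

definition profile :: "'c list list" where
  "profile = map (\<lambda>i. sort_key (rank_key i) L) [0..<2 * t]"

lemma length_profile: "length profile = 2 * t"
  by (simp add: profile_def)

lemma nth_profile: "i < 2 * t \<Longrightarrow> profile ! i = sort_key (rank_key i) L"
  by (simp add: profile_def)

lemma is_profile_profile: "is_profile (set L) profile"
  using distinct_L by (auto simp: is_profile_def is_ranking_def profile_def)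

lemma top_profile:
  assumes "i < 2 * t"
  shows "top profile i = L ! i"
proof -
  have "L ! i \<in> set (sort_key (rank_key i) L)"
    using assms two_t_le_length by simp
  then obtain c cs where sorted_eq: "sort_key (rank_key i) L = c # cs"
    by (cases "sort_key (rank_key i) L") auto
  then have "rank_key i c \<le> rank_key i (L ! i) \<or> c = L ! i"
    using \<open>L ! i \<in> set (sort_key (rank_key i) L)\<close> sorted_sort_key[of "rank_key i" L]
    by auto
  then have "c = L ! i"
    by (auto simp: rank_key_def split: if_splits)
  then show ?thesis
    using assms sorted_eq by (simp add: top_def nth_profile)
qed

(* Half k, voters and candidates alike, is collapsed to one point of a shared leg; every
   other candidate gets a leg of its own, shared with its voter if it has one. *)
definition position :: "nat \<Rightarrow> nat + 'c \<Rightarrow> 'c option \<times> real" where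
  "position k x = (case x of
      Inl i \<Rightarrow> if i div t = k then (None, (1 + \<alpha>) / 2) else (Some (L ! i), (1 - \<alpha>) / 2)
    | Inr c \<Rightarrow> (if c \<in> half k then None else Some c, (1 + \<alpha>) / 2))"

definition collapse_dist :: "nat \<Rightarrow> nat + 'c \<Rightarrow> nat + 'c \<Rightarrow> real" where
  "collapse_dist k x y = spider_dist (position k x) (position k y)"

lemma is_metric_on_collapse_dist: "is_metric_on P (collapse_dist k)"
  unfolding collapse_dist_def
  by (rule is_metric_on_spider_dist)
    (use \<alpha>_nonneg \<alpha>_le_1 in \<open>auto simp: position_def split: sum.split\<close>)

lemma collapse_dist_voter:
  assumes "i < 2 * t" and "k \<le> 1"
  shows "collapse_dist k (Inl i) (Inr c) =
    (if i div t = k then (if c \<in> half k then 0 else 1 + \<alpha>) else (if c = L ! i then \<alpha> else 1))"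
proof -
  have "(1 - \<alpha>) / 2 + (1 + \<alpha>) / 2 = 1" and "\<bar>(1 - \<alpha>) / 2 - (1 + \<alpha>) / 2\<bar> = \<alpha>"
    using \<alpha>_nonneg by (simp_all add: field_simps)
  then show ?thesis
    using nth_in_half_iff[OF assms] by (auto simp: collapse_dist_def position_def spider_dist_def)
qed

lemma consistent_collapse_dist:
  assumes "k \<le> 1"
  shows "consistent profile (collapse_dist k)"
proof (rule consistent_if_sorted_by_key[where key = rank_key])
  fix i c c'
  assume "i < length profile" and "rank_key i c \<le> rank_key i c'"
  then show "collapse_dist k (Inl i) (Inr c) \<le> collapse_dist k (Inl i) (Inr c')"
    using assms nth_in_half_iff[of i k] \<alpha>_nonneg \<alpha>_le_1
    by (auto simp: length_profile collapse_dist_voter rank_key_def split: if_splits)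
qed (simp add: length_profile nth_profile)

lemma decisive_collapse_dist:
  assumes "k \<le> 1"
  shows "decisive \<alpha> (set L) profile (collapse_dist k)"
  unfolding decisive_def length_profile
proof (intro allI impI ballI)
  fix i c
  assume "i < 2 * t" and "c \<noteq> top profile i"
  then show
    "collapse_dist k (Inl i) (Inr (top profile i)) \<le> \<alpha> * collapse_dist k (Inl i) (Inr c)"
    using assms nth_in_half_iff[of i k] \<alpha>_nonneg
    by (auto simp: top_profile collapse_dist_voter)
qed

lemma SC_collapse_dist:
  assumes "k \<le> 1"
  shows "SC profile (collapse_dist k) c =
    (\<Sum>i\<in>block k. if c \<in> half k then 0 else 1 + \<alpha>) +
    (\<Sum>i\<in>block (1 - k). if c = L ! i then \<alpha> else 1)" (is "_ = ?rhs")
proof -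
  have "SC profile (collapse_dist k) c =
      (\<Sum>i\<in>block k \<union> block (1 - k). collapse_dist k (Inl i) (Inr c))"
    unfolding SC_def length_profile lessThan_eq_blocks(1)[OF assms] ..
  also have "\<dots> = (\<Sum>i\<in>block k. collapse_dist k (Inl i) (Inr c)) +
      (\<Sum>i\<in>block (1 - k). collapse_dist k (Inl i) (Inr c))"
    using lessThan_eq_blocks(2)[OF assms] by (intro sum.union_disjoint) (auto simp: block_def)
  also have "\<dots> = ?rhs"
  proof -
    have "i < 2 * t" if "i \<in> block k \<union> block (1 - k)" for i
      using that lessThan_eq_blocks(1)[OF assms] by blast
    moreover have "1 - k \<noteq> k"
      by arith
    ultimately have
        "i \<in> block k \<Longrightarrow> collapse_dist k (Inl i) (Inr c) = (if c \<in> half k then 0 else 1 + \<alpha>)"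
        "i \<in> block (1 - k) \<Longrightarrow> collapse_dist k (Inl i) (Inr c) = (if c = L ! i then \<alpha> else 1)"
        for i
      using assms by (simp_all add: collapse_dist_voter in_block_iff)
    then show ?thesis
      by (simp cong: sum.cong)
  qed
  finally show ?thesis .
qed

lemma SC_collapsed_half:
  assumes "k \<le> 1" and "y \<in> half k"
  shows "SC profile (collapse_dist k) y = t"
proof -
  have "y \<noteq> L ! i" if "i \<in> block (1 - k)" for i
    using that assms half_disjoint[OF assms(1)] by (auto simp: half_def)
  then show ?thesis
    using assms by (simp add: SC_collapse_dist block_def)
qed

lemma SC_outside_collapsed_half:
  assumes "k \<le> 1" and "x \<notin> half k"
  shows "(2 + \<alpha>) * t - (1 - \<alpha>) \<le> SC profile (collapse_dist k) x"
proof -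
  have "t - (1 - \<alpha>) \<le> (\<Sum>i\<in>block (1 - k). if x = L ! i then \<alpha> else 1)"
  proof (cases "x \<in> half (1 - k)")
    case True
    then obtain j where j: "j \<in> block (1 - k)" "x = L ! j"
      by (auto simp: half_def)
    then have "x = L ! i \<longleftrightarrow> i = j" if "i \<in> block (1 - k)" for i
      using that inj_on_nth_voters lessThan_eq_blocks(1)[OF assms(1)]
      by (auto simp: inj_on_eq_iff)
    then have "(\<Sum>i\<in>block (1 - k). if x = L ! i then \<alpha> else 1) =
        (\<Sum>i\<in>block (1 - k). if i = j then \<alpha> else 1)"
      by (intro sum.cong) auto
    also have "\<dots> = \<alpha> + (t - 1)"
      using j t_pos by (simp add: sum.delta_remove block_def of_nat_diff)
    finally show ?thesis
      by simp
  next
    case False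
    then have "x \<noteq> L ! i" if "i \<in> block (1 - k)" for i
      using that by (auto simp: half_def)
    then show ?thesis
      using \<alpha>_le_1 by (simp add: block_def)
  qed
  then show ?thesis
    using assms by (simp add: SC_collapse_dist block_def algebra_simps)
qed

lemma distortion_at_least_split_profile:
  "distortion_at_least (set L) \<alpha> f (((2 + \<alpha>) * t - (1 - \<alpha>)) / t)"
proof -
  define k :: nat where "k = (if f profile \<in> half 0 then 1 else 0)"
  have "k \<le> 1" and winner: "f profile \<notin> half k"
    using half_disjoint[of 0] by (auto simp: k_def)
  have "2 + \<alpha> \<le> (2 + \<alpha>) * t"
    using t_pos \<alpha>_nonneg mult_left_mono[of 1 "real t" "2 + \<alpha>"] by simp
  then have "1 - \<alpha> < (2 + \<alpha>) * t"
    using \<alpha>_nonneg by linarith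
  show ?thesis
  proof (rule distortion_at_leastI)
    show "is_profile (set L) profile" and "profile \<noteq> []"
      using is_profile_profile t_pos by (auto simp: profile_def)
    show "is_metric_on (points (length profile) (set L)) (collapse_dist k)"
      by (rule is_metric_on_collapse_dist)
    show "consistent profile (collapse_dist k)" and "decisive \<alpha> (set L) profile (collapse_dist k)"
      using consistent_collapse_dist decisive_collapse_dist \<open>k \<le> 1\<close> by auto
    show "L ! (k * t) \<in> set L"
      using nth_in_half half_subset \<open>k \<le> 1\<close> by blast
    show "0 < SC profile (collapse_dist k) (L ! (k * t))"
      using SC_collapsed_half nth_in_half \<open>k \<le> 1\<close> t_pos by simp
    show "((2 + \<alpha>) * t - (1 - \<alpha>)) / t * SC profile (collapse_dist k) (L ! (k * t))
        \<le> SC profile (collapse_dist k) (f profile)"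
      using SC_collapsed_half nth_in_half SC_outside_collapsed_half winner \<open>k \<le> 1\<close> t_pos
      by simp
  qed (use \<open>1 - \<alpha> < (2 + \<alpha>) * t\<close> t_pos in auto)
qed

end

theorem theorem2:
  fixes C :: "'c set" and m :: nat and \<alpha> :: real and f :: "'c list list \<Rightarrow> 'c"
  assumes "finite C" and "card C = m" and "m \<ge> 2"
    and "0 \<le> \<alpha>" and "\<alpha> \<le> 1"
    and "is_rule C f"
  shows "distortion_at_least C \<alpha> f (2 + \<alpha> - 2 * (1 - \<alpha>) / real (floor_even m))"
proof -
  obtain L where set_L: "set L = C" and "distinct L"
    using finite_distinct_list[OF \<open>finite C\<close>] by blast
  define t where "t = m div 2"
  interpret split_profile L t \<alpha>
    using assms \<open>distinct L\<close> distinct_card[OF \<open>distinct L\<close>] set_L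
    by unfold_locales (auto simp: t_def)
  have "2 + \<alpha> - 2 * (1 - \<alpha>) / real (floor_even m) = ((2 + \<alpha>) * t - (1 - \<alpha>)) / t"
    using t_pos by (simp add: floor_even_def t_def field_simps)
  then show ?thesis
    using distortion_at_least_split_profile[of f] set_L by simp
qed

end
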